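(* Let $F$ be a face of $\delta\mathcal{A}_{\bm o}$ and let $\bm a,\bm b\in\operatorname{relint}(F)$. Then (i) the parallel translations $\mathcal{A}_{\bm a}$ and $\mathcal{A}_{\bm b}$ are normally equivalent and combinatorially equivalent; (ii) the conings $c\mathcal{A}_{\bm a}$ and $c\mathcal{A}_{\bm b}$ are combinatorially equivalent; (iii) the elementary lifts $\mathcal{A}^{\bm a}$ and $\mathcal{A}^{\bm b}$ are combinatorially equivalent.
   Context: Fix nonzero vectors $\bm u_1,\dots,\bm u_m\in\mathbb{R}^n$ (repetitions and parallel vectors allowed). Derived arrangement: a circuit is a subset $C\subseteq[m]$ such that the indexed family $\{\bm u_i: i\in C\}$ is a minimal linearly dependent family; for each circuit fix $\bm c^C\in\mathbb{R}^m$ with $\sum_i c_i\bm u_i=\bm 0$ and $c_i\ne 0\iff i\in C$. The derived arrangement $\delta\mathcal{A}_{\bm o}$ is the arrangement in $\mathbb{R}^m$ of hyperplanes $\langle\bm c^C,\bm y\rangle=0$ over all circuits $C$; its open faces are the nonempty sets $\{\bm y:\operatorname{sign}\langle\bm c^C,\bm y\rangle=\epsilon_C\ \forall C\}$ for fixed signs $\epsilon_C$, its faces are their closures, and $\operatorname{relint}(F)$ is the open face with closure $F$. Arrangements: for $\bm a\in\mathbb{R}^m$, the parallel translation $\mathcal{A}_{\bm a}$ is the indexed family of affine hyperplanes $H_i=\{\bm x\in\mathbb{R}^n:\langle\bm u_i,\bm x\rangle=a_i\}$, $i=1,\dots,m$; the coning $c\mathcal{A}_{\bm a}$ is the family in $\mathbb{R}^{n+1}$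 of the $m+1$ linear hyperplanes $\{(\bm x,x_{n+1}):\langle\bm u_i,\bm x\rangle+a_ix_{n+1}=0\}$, $i=1,\dots,m$, together with $K_0=\{x_{n+1}=0\}$; the elementary lift $\mathcal{A}^{\bm a}$ is the family in $\mathbb{R}^{n+1}$ of the $m$ hyperplanes $\{\langle\bm u_i,\bm x\rangle+a_ix_{n+1}=0\}$, $i=1,\dots,m$. For an arrangement $\mathcal{A}$ of finitely many affine hyperplanes $\{\bm z:\langle\bm w_i,\bm z\rangle=d_i\}$, the open faces are the nonempty subsets of points having the same sign vector $(\operatorname{sign}(\langle\bm w_i,\bm z\rangle-d_i))_i$, the faces are their closures, and the face poset $\mathcal{F}(\mathcal{A})$ is the set of faces ordered by inclusion. Two arrangements are combinatorially equivalent if their face posets are isomorphic. For a nonempty convex polyhedron $P$, $h_P(\bm u)=\sup_{\bm x\in P}\langle\bm u,\bm x\rangle$, $N_P(\bm x)=\{\bm u:\langle\bm u,\bm x\rangle=h_P(\bm u)\}$ for $\bm x\in P$, $N_P(G)=N_P(\bm x)$ for $\bm x\in\operatorname{relint}(G)$, and the normal fan $\mathcal{N}(P)$ is the set of all $N_P(G)$, $G$ a nonempty face; $P,Q$ are normally equivalent if $\mathcal{N}(P)=\mathcal{N}(Q)$. Two arrangements $\mathcal{A},\mathcal{A}'$ in the same $\mathbb{R}^n$ are normally equivalent if there is an order-preserving bijection $\Psi:\mathcal{F}(\mathcal{A})\to\mathcal{F}(\mathcal{A}')$ such that $F$ and $\Psi(F)$ are normally equivalent for every face $F$. *)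

theory Defs
  imports "HOL-Analysis.Analysis"
begin

text \<open>The configuration u_1,...,u_m in R^n is a map u from a finite index type 'm
  (so m = CARD('m)) to real^'n. An indexed subfamily {u_i : i in C} is linearly
  independent if every vanishing linear combination has zero coefficients
  (repetitions are respected because we work with the indexed family).\<close>

definition indep_family :: "('m \<Rightarrow> 'v::real_vector) \<Rightarrow> 'm set \<Rightarrow> bool" where
  "indep_family u C \<longleftrightarrow> (\<forall>c. (\<Sum>i\<in>C. c i *\<^sub>R u i) = 0 \<longrightarrow> (\<forall>i\<in>C. c i = 0))"

definition circuit :: "('m \<Rightarrow> 'v::real_vector) \<Rightarrow> 'm set \<Rightarrow> bool" where
  "circuit u C \<longleftrightarrow> \<not> indep_family u C \<and> (\<forall>D. D \<subset> C \<longrightarrow> indep_family u D)"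

definition circuit_vectors :: "('m::finite \<Rightarrow> 'v::real_vector) \<Rightarrow> ('m set \<Rightarrow> real^'m) \<Rightarrow> bool" where
  "circuit_vectors u c \<longleftrightarrow>
     (\<forall>C. circuit u C \<longrightarrow> (\<Sum>i\<in>UNIV. (c C $ i) *\<^sub>R u i) = 0 \<and> (\<forall>i. c C $ i \<noteq> 0 \<longleftrightarrow> i \<in> C))"

text \<open>An arrangement is given by an index set I and, for each index i, a pair
  (w_i, d_i) describing the hyperplane <w_i, z> = d_i.\<close>

definition sgnvec :: "'i set \<Rightarrow> ('i \<Rightarrow> 'v::real_inner \<times> real) \<Rightarrow> 'v \<Rightarrow> 'i \<Rightarrow> real" where
  "sgnvec I H z = (\<lambda>i. if i \<in> I then sgn (inner (fst (H i)) z - snd (H i)) else 0)"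

definition arr_open_faces :: "'i set \<Rightarrow> ('i \<Rightarrow> 'v::real_inner \<times> real) \<Rightarrow> 'v set set" where
  "arr_open_faces I H = {{y. sgnvec I H y = sgnvec I H z} | z. True}"

definition arr_faces :: "'i set \<Rightarrow> ('i \<Rightarrow> 'v::real_inner \<times> real) \<Rightarrow> 'v set set" where
  "arr_faces I H = closure ` arr_open_faces I H"

definition comb_equiv ::
  "'i set \<Rightarrow> ('i \<Rightarrow> 'v::real_inner \<times> real) \<Rightarrow> 'j set \<Rightarrow> ('j \<Rightarrow> 'w::real_inner \<times> real) \<Rightarrow> bool" where
  "comb_equiv I H J K \<longleftrightarrow>
     (\<exists>\<Psi>. bij_betw \<Psi> (arr_faces I H) (arr_faces J K) \<and>
          (\<forall>F\<in>arr_faces I H. \<forall>G\<in>arr_faces I H. F \<subseteq> G \<longleftrightarrow> \<Psi> F \<subseteq> \<Psi> G))"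

definition support_fn :: "'v::real_inner set \<Rightarrow> 'v \<Rightarrow> ereal" where
  "support_fn P u = (SUP x\<in>P. ereal (inner u x))"

definition normal_cone_at :: "'v::real_inner set \<Rightarrow> 'v \<Rightarrow> 'v set" where
  "normal_cone_at P x = {u. ereal (inner u x) = support_fn P u}"

text \<open>N_P(G) = N_P(x) for x in relint G; the normal fan collects these for all
  nonempty faces G of P.\<close>

definition normal_fan :: "'v::euclidean_space set \<Rightarrow> 'v set set" where
  "normal_fan P = {normal_cone_at P x | G x. G face_of P \<and> G \<noteq> {} \<and> x \<in> rel_interior G}"

definition normally_equiv_arr ::
  "'i set \<Rightarrow> ('i \<Rightarrow> 'v::euclidean_space \<times> real) \<Rightarrow> 'j set \<Rightarrow> ('j \<Rightarrow> 'v \<times> real) \<Rightarrow> bool" where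
  "normally_equiv_arr I H J K \<longleftrightarrow>
     (\<exists>\<Psi>. bij_betw \<Psi> (arr_faces I H) (arr_faces J K) \<and>
          (\<forall>F\<in>arr_faces I H. \<forall>G\<in>arr_faces I H. F \<subseteq> G \<longrightarrow> \<Psi> F \<subseteq> \<Psi> G) \<and>
          (\<forall>F\<in>arr_faces I H. normal_fan F = normal_fan (\<Psi> F)))"

definition derived_arr :: "('m::finite \<Rightarrow> real^'n) \<Rightarrow> ('m set \<Rightarrow> real^'m) \<Rightarrow> 'm set \<Rightarrow> (real^'m) \<times> real" where
  "derived_arr u c = (\<lambda>C. (c C, 0))"

definition par_trans :: "('m::finite \<Rightarrow> real^'n) \<Rightarrow> real^'m \<Rightarrow> 'm \<Rightarrow> (real^'n) \<times> real" where
  "par_trans u a = (\<lambda>i. (u i, a $ i))"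

text \<open>R^(n+1) is rendered as (real^'n) \<times> real, the last coordinate being x_(n+1).
  Coning: indices Some i give <u_i,x> + a_i x_(n+1) = 0, index None gives K_0.\<close>

definition coning :: "('m::finite \<Rightarrow> real^'n) \<Rightarrow> real^'m \<Rightarrow> 'm option \<Rightarrow> ((real^'n) \<times> real) \<times> real" where
  "coning u a = (\<lambda>j. case j of None \<Rightarrow> ((0, 1), 0) | Some i \<Rightarrow> ((u i, a $ i), 0))"

definition elem_lift :: "('m::finite \<Rightarrow> real^'n) \<Rightarrow> real^'m \<Rightarrow> 'm \<Rightarrow> ((real^'n) \<times> real) \<times> real" where
  "elem_lift u a = (\<lambda>i. ((u i, a $ i), 0))"

end

theory Submission
  imports Defs
begin

(*
  Faces of an arrangement indexed by all of its hyperplanes are the closures of its sign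
  cells: the face poset is the set of realized sign vectors under the conformal order, and the
  normal fan of a face depends only on the normal vectors and on the realized sign vectors
  below it. So all four equivalences follow once the arrangements for a and for b realize the
  same sign vectors.

  For the translates this is a consequence of Motzkin's transposition theorem: a sign vector s
  is not realized by A_b iff some linear dependency l of the u_i is sign-compatible with s and
  pairs positively with b (or vanishes on b but not on the support of s). Conformal
  decomposition into circuits reduces such a certificate to a multiple of a single circuit
  vector c^C, and whether that is a certificate depends on b only through sgn <c^C, b>, which
  is the same for a and b when they lie in the same open face of the derived arrangement.
  Conings and elementary lifts inherit the equality by dehomogenizing at x_(n+1) <> 0.
*)

lemma sgn_real_cases: "sgn (t::real) = -1 \<or> sgn t = 0 \<or> sgn t = 1"
  by (simp add: sgn_real_def)

lemma sgn_conforms_iff: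
  fixes s t :: real
  assumes "s = -1 \<or> s = 0 \<or> s = 1"
  shows "sgn t = 0 \<or> sgn t = s \<longleftrightarrow> s * t = \<bar>t\<bar>"
  using assms by (cases "t > 0"; cases "t < 0") auto

lemma sgn_conforms_imp_nonneg:
  fixes s t :: real
  shows "sgn t = 0 \<or> sgn t = s \<Longrightarrow> 0 \<le> s * t"
  by (cases "t > 0"; cases "t < 0") auto

lemma sgn_eq_iff_pos_mult:
  fixes s t :: real
  assumes "s = 1 \<or> s = -1"
  shows "sgn t = s \<longleftrightarrow> 0 < s * t"
  using assms by (cases "t > 0"; cases "t < 0") (auto simp: zero_less_mult_iff)

lemma sgn_eq_imp_mult_nonneg_iff:
  fixes x y s :: real
  assumes "sgn x = sgn y"
  shows "0 \<le> x * s \<longleftrightarrow> 0 \<le> y * s"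
proof -
  have "0 \<le> t \<longleftrightarrow> 0 \<le> sgn t" for t :: real by (simp add: sgn_if)
  then show ?thesis using assms by (metis sgn_mult)
qed

lemma sgn_mult_self_pos: "(p::real) \<noteq> 0 \<Longrightarrow> 0 < sgn p * p"
  by (cases "p > 0") (auto simp: sgn_if)

lemma sgn_convex_combination:
  fixes p q t :: real
  assumes "0 < t" "t < 1" "sgn q = 0 \<or> sgn q = sgn p"
  shows "sgn ((1 - t) * p + t * q) = sgn p"
proof -
  have "0 < 1 - t" using assms by simp
  consider "p > 0" "q \<ge> 0" | "p = 0" "q = 0" | "p < 0" "q \<le> 0"
    using assms(3) by (auto simp: sgn_if split: if_splits)
  then show ?thesis
  proof cases
    case 1
    then have "0 < (1 - t) * p + t * q" using \<open>0 < 1 - t\<close> assms(1) by (simp add: add_pos_nonneg)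
    then show ?thesis using 1 by simp
  next
    case 3
    then have "(1 - t) * p + t * q < 0" using \<open>0 < 1 - t\<close> assms(1)
      by (simp add: add_neg_nonpos mult_pos_neg mult_nonneg_nonpos)
    then show ?thesis using 3 by simp
  qed simp
qed

lemma sgn_convex_combination_conforms:
  fixes p q c1 c2 s :: real
  assumes "c1 \<ge> 0" "c2 \<ge> 0" "sgn p = 0 \<or> sgn p = s" "sgn q = 0 \<or> sgn q = s"
  shows "sgn (c1 * p + c2 * q) = 0 \<or> sgn (c1 * p + c2 * q) = s"
proof -
  consider "p = 0" "q = 0" | "s = 1" "p \<ge> 0" "q \<ge> 0" | "s = -1" "p \<le> 0" "q \<le> 0"
    using assms(3,4) by (auto simp: sgn_if split: if_splits)
  then show ?thesis
  proof cases
    case 2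
    then have "c1 * p + c2 * q \<ge> 0" using assms by simp
    then show ?thesis using 2 by (auto simp: sgn_if)
  next
    case 3
    then have "c1 * p + c2 * q \<le> 0" using assms by (simp add: add_nonpos_nonpos mult_nonneg_nonpos)
    then show ?thesis using 3 by (auto simp: sgn_if)
  qed simp
qed

lemma sgn_diff_conforms:
  fixes l m t :: real
  assumes t: "0 < t" and le: "0 < l * m \<Longrightarrow> t \<le> l / m" and support: "m \<noteq> 0 \<Longrightarrow> l \<noteq> 0"
  shows "sgn (l - t * m) = 0 \<or> sgn (l - t * m) = sgn l"
proof -
  have "l * m > 0 \<or> l = 0 \<and> m = 0 \<or> l > 0 \<and> m \<le> 0 \<or> l < 0 \<and> m \<ge> 0"
    using support by (cases l rule: linorder_cases; cases m rule: linorder_cases)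
      (auto simp: zero_less_mult_iff)
  then consider "l * m > 0" | "l = 0" "m = 0" | "l > 0" "m \<le> 0" | "l < 0" "m \<ge> 0" by blast
  then show ?thesis
  proof cases
    case 1
    then have "t * m \<le> l \<and> 0 < m \<or> l \<le> t * m \<and> m < 0"
      using le by (auto simp: zero_less_mult_iff pos_le_divide_eq neg_le_divide_eq)
    then show ?thesis using 1 t by (auto simp: sgn_if zero_less_mult_iff mult_pos_pos)
  next
    case 3 then have "t * m \<le> 0" using t by (simp add: mult_nonneg_nonpos)
    then show ?thesis using 3 by (simp add: sgn_if)
  next
    case 4 then have "t * m \<ge> 0" using t by simp
    then show ?thesis using 4 by (simp add: sgn_if)
  qed simp
qed

section \<open>Sign vectors and the face poset\<close>

definition sign_vector :: "('i \<Rightarrow> 'v::real_inner \<times> real) \<Rightarrow> 'v \<Rightarrow> 'i \<Rightarrow> real" where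
  "sign_vector H y = (\<lambda>i. sgn (fst (H i) \<bullet> y - snd (H i)))"

definition sign_le :: "('i \<Rightarrow> real) \<Rightarrow> ('i \<Rightarrow> real) \<Rightarrow> bool" where
  "sign_le \<tau> \<sigma> \<longleftrightarrow> (\<forall>i. \<tau> i = 0 \<or> \<tau> i = \<sigma> i)"

definition closed_cell :: "('i \<Rightarrow> 'v::real_inner \<times> real) \<Rightarrow> ('i \<Rightarrow> real) \<Rightarrow> 'v set" where
  "closed_cell H \<sigma> = {y. sign_le (sign_vector H y) \<sigma>}"

lemma sgnvec_UNIV: "sgnvec UNIV H = sign_vector H"
  by (auto simp: sgnvec_def sign_vector_def)

lemma sign_le_refl: "sign_le \<sigma> \<sigma>"
  by (simp add: sign_le_def)

lemma sign_le_trans: "sign_le \<rho> \<sigma> \<Longrightarrow> sign_le \<sigma> \<tau> \<Longrightarrow> sign_le \<rho> \<tau>"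
  unfolding sign_le_def by metis

lemma sign_le_antisym: "sign_le \<tau> \<sigma> \<Longrightarrow> sign_le \<sigma> \<tau> \<Longrightarrow> \<tau> = \<sigma>"
  unfolding sign_le_def by (rule ext) metis

lemma mem_closed_cell: "y \<in> closed_cell H \<sigma> \<longleftrightarrow> sign_le (sign_vector H y) \<sigma>"
  by (simp add: closed_cell_def)

lemma sign_vector_mem_closed_cell: "y \<in> closed_cell H (sign_vector H y)"
  by (simp add: mem_closed_cell sign_le_refl)

lemma closed_closed_cell:
  assumes "\<sigma> \<in> range (sign_vector H)"
  shows "closed (closed_cell H \<sigma>)"
proof -
  let ?f = "\<lambda>i y. fst (H i) \<bullet> y - snd (H i)"
  have "closed {y. sgn (?f i y) = 0 \<or> sgn (?f i y) = \<sigma> i}" for i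
  proof -
    have "\<sigma> i = -1 \<or> \<sigma> i = 0 \<or> \<sigma> i = 1"
      using assms sgn_real_cases by (auto simp: sign_vector_def)
    then have "{y. sgn (?f i y) = 0 \<or> sgn (?f i y) = \<sigma> i} = {y. \<sigma> i * ?f i y = \<bar>?f i y\<bar>}"
      by (simp add: sgn_conforms_iff)
    moreover have "closed {y. \<sigma> i * ?f i y = \<bar>?f i y\<bar>}"
      by (intro closed_Collect_eq continuous_intros)
    ultimately show ?thesis by simp
  qed
  moreover have "closed_cell H \<sigma> = (\<Inter>i. {y. sgn (?f i y) = 0 \<or> sgn (?f i y) = \<sigma> i})"
    by (auto simp: closed_cell_def sign_le_def sign_vector_def)
  ultimately show ?thesis by auto
qed

text \<open>Each point of the closed cell is joined to a point of the open cell by an open segment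
  lying in the open cell.\<close>

lemma closure_open_cell:
  fixes H :: "'i \<Rightarrow> 'v::euclidean_space \<times> real"
  assumes "sign_vector H z = \<sigma>"
  shows "closure {y. sign_vector H y = \<sigma>} = closed_cell H \<sigma>"
proof
  show "closure {y. sign_vector H y = \<sigma>} \<subseteq> closed_cell H \<sigma>"
  proof (rule closure_minimal)
    show "closed (closed_cell H \<sigma>)" using assms by (intro closed_closed_cell) blast
  qed (simp add: subset_iff mem_closed_cell sign_le_refl)
  show "closed_cell H \<sigma> \<subseteq> closure {y. sign_vector H y = \<sigma>}"
  proof
    fix y assume y: "y \<in> closed_cell H \<sigma>"
    have seg: "open_segment z y \<subseteq> {y. sign_vector H y = \<sigma>}"
    proof
      fix x assume "x \<in> open_segment z y"
      then obtain t where t: "0 < t" "t < 1" "x = (1 - t) *\<^sub>R z + t *\<^sub>R y"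
        by (auto simp: in_segment)
      have "sign_vector H x i = \<sigma> i" for i
      proof -
        let ?f = "\<lambda>y. fst (H i) \<bullet> y - snd (H i)"
        have \<sigma>: "\<sigma> i = sgn (?f z)" using assms by (auto simp: sign_vector_def)
        have "?f x = (1 - t) * ?f z + t * ?f y"
          by (simp add: t(3) inner_add_right algebra_simps)
        moreover have "sgn (?f y) = 0 \<or> sgn (?f y) = \<sigma> i"
          using y by (simp add: mem_closed_cell sign_le_def sign_vector_def)
        ultimately show ?thesis
          using sgn_convex_combination[OF t(1,2)] unfolding \<sigma> by (simp add: sign_vector_def)
      qed
      then show "x \<in> {y. sign_vector H y = \<sigma>}" by auto
    qed
    show "y \<in> closure {y. sign_vector H y = \<sigma>}"
    proof (cases "y = z")
      case True
      then have "y \<in> {y. sign_vector H y = \<sigma>}" using assms by simp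
      then show ?thesis by (rule closure_subset[THEN subsetD])
    next
      case False
      then have "y \<in> closure (open_segment z y)" by simp
      then show ?thesis using closure_mono[OF seg] by (rule subsetD[rotated])
    qed
  qed
qed

lemma arr_faces_UNIV_eq:
  fixes H :: "'i \<Rightarrow> 'v::euclidean_space \<times> real"
  shows "arr_faces UNIV H = closed_cell H ` range (sign_vector H)"
proof -
  have "arr_open_faces UNIV H = (\<lambda>z. {y. sign_vector H y = sign_vector H z}) ` UNIV"
    by (auto simp: arr_open_faces_def sgnvec_UNIV)
  then have "arr_faces UNIV H = (\<lambda>z. closure {y. sign_vector H y = sign_vector H z}) ` UNIV"
    by (simp add: arr_faces_def image_image)
  also have "\<dots> = (\<lambda>z. closed_cell H (sign_vector H z)) ` UNIV"
    by (rule image_cong) (simp_all add: closure_open_cell)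
  finally show ?thesis by (simp add: image_image)
qed

lemma closed_cell_subset_iff:
  assumes "\<sigma> \<in> range (sign_vector H)"
  shows "closed_cell H \<sigma> \<subseteq> closed_cell H \<tau> \<longleftrightarrow> sign_le \<sigma> \<tau>"
proof
  obtain z where "sign_vector H z = \<sigma>" using assms by auto
  then show "closed_cell H \<sigma> \<subseteq> closed_cell H \<tau> \<Longrightarrow> sign_le \<sigma> \<tau>"
    using sign_vector_mem_closed_cell[of z H] by (auto simp: mem_closed_cell)
qed (meson mem_closed_cell sign_le_trans subsetI)

lemma bij_betw_closed_cell:
  fixes H :: "'i \<Rightarrow> 'v::euclidean_space \<times> real"
  shows "bij_betw (closed_cell H) (range (sign_vector H)) (arr_faces UNIV H)"
  unfolding arr_faces_UNIV_eq
  by (intro inj_on_imp_bij_betw inj_onI equalityI sign_le_antisym)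
     (simp_all add: closed_cell_subset_iff[symmetric])

lemma face_poset_iso:
  fixes H :: "'i \<Rightarrow> 'v::euclidean_space \<times> real" and K :: "'i \<Rightarrow> 'w::euclidean_space \<times> real"
  assumes "range (sign_vector H) = range (sign_vector K)"
  shows "\<exists>\<Psi>. bij_betw \<Psi> (arr_faces UNIV H) (arr_faces UNIV K) \<and>
    (\<forall>F\<in>arr_faces UNIV H. \<forall>G\<in>arr_faces UNIV H. F \<subseteq> G \<longleftrightarrow> \<Psi> F \<subseteq> \<Psi> G) \<and>
    (\<forall>\<sigma>\<in>range (sign_vector H). \<Psi> (closed_cell H \<sigma>) = closed_cell K \<sigma>)"
proof (intro exI conjI ballI)
  let ?\<Psi> = "closed_cell K \<circ> inv_into (range (sign_vector H)) (closed_cell H)"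
  have bij: "bij_betw (closed_cell H) (range (sign_vector H)) (arr_faces UNIV H)"
    by (rule bij_betw_closed_cell)
  show \<Psi>: "?\<Psi> (closed_cell H \<sigma>) = closed_cell K \<sigma>" if "\<sigma> \<in> range (sign_vector H)" for \<sigma>
    using bij_betw_inv_into_left[OF bij that] by simp
  show "bij_betw ?\<Psi> (arr_faces UNIV H) (arr_faces UNIV K)"
    using bij_betw_trans[OF bij_betw_inv_into[OF bij] bij_betw_closed_cell[of K, folded assms]] .
  show "F \<subseteq> G \<longleftrightarrow> ?\<Psi> F \<subseteq> ?\<Psi> G"
    if FG: "F \<in> arr_faces UNIV H" "G \<in> arr_faces UNIV H" for F G
  proof -
    obtain \<sigma> where "\<sigma> \<in> range (sign_vector H)" "F = closed_cell H \<sigma>"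
      using FG(1) unfolding arr_faces_UNIV_eq by (rule imageE) simp
    moreover obtain \<tau> where "\<tau> \<in> range (sign_vector H)" "G = closed_cell H \<tau>"
      using FG(2) unfolding arr_faces_UNIV_eq by (rule imageE) simp
    ultimately show ?thesis
      using \<Psi> closed_cell_subset_iff[of \<sigma> H] closed_cell_subset_iff[of \<sigma> K, folded assms] by simp
  qed
qed

lemma comb_equiv_if_same_sign_vectors:
  fixes H :: "'i \<Rightarrow> 'v::euclidean_space \<times> real" and K :: "'i \<Rightarrow> 'w::euclidean_space \<times> real"
  assumes "range (sign_vector H) = range (sign_vector K)"
  shows "comb_equiv UNIV H UNIV K"
  using face_poset_iso[OF assms] unfolding comb_equiv_def by blast

section \<open>Normal fans of closed cells\<close>

lemma normal_cone_at_eq: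
  assumes "x \<in> S"
  shows "normal_cone_at S x = {v. \<forall>y\<in>S. v \<bullet> y \<le> v \<bullet> x}"
proof -
  have "ereal (v \<bullet> x) = support_fn S v \<longleftrightarrow> (\<forall>y\<in>S. v \<bullet> y \<le> v \<bullet> x)" for v
  proof
    assume "ereal (v \<bullet> x) = support_fn S v"
    then show "\<forall>y\<in>S. v \<bullet> y \<le> v \<bullet> x"
      unfolding support_fn_def by (metis SUP_upper ereal_less_eq(3))
  next
    assume "\<forall>y\<in>S. v \<bullet> y \<le> v \<bullet> x"
    then have "support_fn S v \<le> ereal (v \<bullet> x)"
      unfolding support_fn_def by (intro SUP_least) simp
    moreover have "ereal (v \<bullet> x) \<le> support_fn S v"
      unfolding support_fn_def using assms by (rule SUP_upper)
    ultimately show "ereal (v \<bullet> x) = support_fn S v" by simp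
  qed
  then show ?thesis by (auto simp: normal_cone_at_def)
qed

lemma eventually_sign_vector_stable:
  fixes H :: "'i::finite \<Rightarrow> 'v::euclidean_space \<times> real"
  shows "eventually (\<lambda>y. \<forall>i. sign_vector H x i \<noteq> 0 \<longrightarrow> sign_vector H y i = sign_vector H x i) (at x)"
proof (rule eventually_all_finite)
  fix i
  let ?f = "\<lambda>y. fst (H i) \<bullet> y - snd (H i)"
  have lim: "(?f \<longlongrightarrow> ?f x) (at x)" by (intro tendsto_intros)
  consider "?f x > 0" | "?f x = 0" | "?f x < 0" by linarith
  then show "eventually (\<lambda>y. sign_vector H x i \<noteq> 0 \<longrightarrow> sign_vector H y i = sign_vector H x i) (at x)"
  proof cases
    case 1
    with order_tendstoD(1)[OF lim 1] show ?thesis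
      by (auto elim!: eventually_mono simp: sign_vector_def)
  next
    case 3
    with order_tendstoD(2)[OF lim 3] show ?thesis
      by (auto elim!: eventually_mono simp: sign_vector_def)
  qed (simp add: sign_vector_def)
qed

lemma sign_vector_locally_stable:
  fixes H :: "'i::finite \<Rightarrow> 'v::euclidean_space \<times> real"
  obtains e where "e > 0"
    "\<And>y i. dist y x < e \<Longrightarrow> sign_vector H x i \<noteq> 0 \<Longrightarrow> sign_vector H y i = sign_vector H x i"
  using eventually_sign_vector_stable[of H x] unfolding eventually_at by (metis UNIV_I)

text \<open>The polar of the cone of directions along which one stays in the closed cell of \<open>\<sigma>\<close>
  from a point of sign vector \<open>\<tau>\<close>; only the hyperplanes through the point (\<open>\<tau> i = 0\<close>)
  constrain these directions.\<close>

definition cell_normal_cone :: "('i \<Rightarrow> 'v::real_inner) \<Rightarrow> ('i \<Rightarrow> real) \<Rightarrow> ('i \<Rightarrow> real) \<Rightarrow> 'v set" where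
  "cell_normal_cone w \<sigma> \<tau> =
     {v. \<forall>d. (\<forall>i. \<tau> i = 0 \<longrightarrow> sgn (w i \<bullet> d) = 0 \<or> sgn (w i \<bullet> d) = \<sigma> i) \<longrightarrow> v \<bullet> d \<le> 0}"

lemma step_in_closed_cell:
  fixes H :: "'i::finite \<Rightarrow> 'v::euclidean_space \<times> real"
  assumes x: "x \<in> closed_cell H \<sigma>"
    and d: "\<forall>i. sign_vector H x i = 0 \<longrightarrow> sgn (fst (H i) \<bullet> d) = 0 \<or> sgn (fst (H i) \<bullet> d) = \<sigma> i"
  obtains t where "t > 0" "x + t *\<^sub>R d \<in> closed_cell H \<sigma>"
proof -
  obtain e where e: "e > 0"
    "\<And>y i. dist y x < e \<Longrightarrow> sign_vector H x i \<noteq> 0 \<Longrightarrow> sign_vector H y i = sign_vector H x i"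
    using sign_vector_locally_stable by blast
  define t where "t = e / (2 * (norm d + 1))"
  have pos: "0 < 2 * (norm d + 1)" by (smt (verit) norm_ge_zero)
  have t: "t > 0" using e(1) pos by (simp add: t_def)
  have "t * norm d \<le> t * (norm d + 1)" using t by simp
  also have "\<dots> = e / 2" using pos by (simp add: t_def field_simps)
  also have "\<dots> < e" using e(1) by simp
  finally have close: "dist (x + t *\<^sub>R d) x < e" using t by (simp add: dist_norm)
  have "sign_vector H (x + t *\<^sub>R d) i = 0 \<or> sign_vector H (x + t *\<^sub>R d) i = \<sigma> i" for i
  proof (cases "sign_vector H x i = 0")
    case True
    then have "fst (H i) \<bullet> x - snd (H i) = 0" by (simp add: sign_vector_def sgn_0_0)
    then have "sign_vector H (x + t *\<^sub>R d) i = sgn (fst (H i) \<bullet> d)"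
      using t by (simp add: sign_vector_def inner_add_right algebra_simps sgn_mult)
    then show ?thesis using d True by simp
  next
    case False
    then show ?thesis using e(2)[OF close] x by (auto simp: mem_closed_cell sign_le_def)
  qed
  then show ?thesis using that t by (simp add: mem_closed_cell sign_le_def)
qed

lemma normal_cone_closed_cell:
  fixes H :: "'i::finite \<Rightarrow> 'v::euclidean_space \<times> real"
  assumes x: "x \<in> closed_cell H \<sigma>"
  shows "normal_cone_at (closed_cell H \<sigma>) x = cell_normal_cone (\<lambda>i. fst (H i)) \<sigma> (sign_vector H x)"
  unfolding normal_cone_at_eq[OF x]
proof (intro set_eqI iffI CollectI ballI)
  fix v y assume v: "v \<in> cell_normal_cone (\<lambda>i. fst (H i)) \<sigma> (sign_vector H x)"
    and y: "y \<in> closed_cell H \<sigma>"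
  have "sgn (fst (H i) \<bullet> (y - x)) = 0 \<or> sgn (fst (H i) \<bullet> (y - x)) = \<sigma> i"
    if "sign_vector H x i = 0" for i
  proof -
    have "fst (H i) \<bullet> (y - x) = fst (H i) \<bullet> y - snd (H i)"
      using that by (simp add: sign_vector_def inner_diff_right sgn_0_0)
    then show ?thesis using y by (auto simp: mem_closed_cell sign_le_def sign_vector_def)
  qed
  then have "v \<bullet> (y - x) \<le> 0" using v by (simp add: cell_normal_cone_def)
  then show "v \<bullet> y \<le> v \<bullet> x" by (simp add: inner_diff_right)
next
  fix v assume v: "v \<in> {v. \<forall>y\<in>closed_cell H \<sigma>. v \<bullet> y \<le> v \<bullet> x}"
  show "v \<in> cell_normal_cone (\<lambda>i. fst (H i)) \<sigma> (sign_vector H x)"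
    unfolding cell_normal_cone_def
  proof (intro CollectI allI impI)
    fix d
    assume "\<forall>i. sign_vector H x i = 0 \<longrightarrow> sgn (fst (H i) \<bullet> d) = 0 \<or> sgn (fst (H i) \<bullet> d) = \<sigma> i"
    then obtain t where t: "t > 0" "x + t *\<^sub>R d \<in> closed_cell H \<sigma>"
      using step_in_closed_cell[OF x] by blast
    then have "v \<bullet> (x + t *\<^sub>R d) \<le> v \<bullet> x" using v by blast
    then have "t * (v \<bullet> d) \<le> 0" by (simp add: inner_add_right)
    then show "v \<bullet> d \<le> 0" using t(1) by (simp add: mult_le_0_iff)
  qed
qed

lemma convex_closed_cell: "convex (closed_cell H \<sigma>)"
  unfolding convex_def
proof (intro ballI allI impI)
  fix x y and c1 c2 :: real
  assume xy: "x \<in> closed_cell H \<sigma>" "y \<in> closed_cell H \<sigma>" and c: "0 \<le> c1" "0 \<le> c2" "c1 + c2 = 1"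
  have "sign_vector H (c1 *\<^sub>R x + c2 *\<^sub>R y) i = 0 \<or> sign_vector H (c1 *\<^sub>R x + c2 *\<^sub>R y) i = \<sigma> i" for i
  proof -
    let ?f = "\<lambda>y. fst (H i) \<bullet> y - snd (H i)"
    have "c1 * ?f x + c2 * ?f y = c1 * (fst (H i) \<bullet> x) + c2 * (fst (H i) \<bullet> y) - (c1 + c2) * snd (H i)"
      by (simp add: algebra_simps)
    then have "?f (c1 *\<^sub>R x + c2 *\<^sub>R y) = c1 * ?f x + c2 * ?f y"
      using c(3) by (simp add: inner_add_right)
    moreover have "sgn (?f x) = 0 \<or> sgn (?f x) = \<sigma> i" "sgn (?f y) = 0 \<or> sgn (?f y) = \<sigma> i"
      using xy by (simp_all add: mem_closed_cell sign_le_def sign_vector_def)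
    then have "sgn (c1 * ?f x + c2 * ?f y) = 0 \<or> sgn (c1 * ?f x + c2 * ?f y) = \<sigma> i"
      using c by (intro sgn_convex_combination_conforms)
    ultimately show ?thesis by (simp add: sign_vector_def)
  qed
  then show "c1 *\<^sub>R x + c2 *\<^sub>R y \<in> closed_cell H \<sigma>" by (simp add: mem_closed_cell sign_le_def)
qed

text \<open>The closed cell of \<open>\<tau>\<close> is cut out of that of \<open>\<sigma>\<close> by the supporting hyperplanes
  \<open>\<sigma> i * (\<langle>w i, y\<rangle> - d i) = 0\<close> for \<open>\<tau> i = 0\<close>.\<close>

lemma closed_cell_face_of:
  assumes "sign_le \<tau> \<sigma>"
  shows "closed_cell H \<tau> face_of closed_cell H \<sigma>"
proof -
  define a where "a i = (if \<tau> i = 0 then \<sigma> i *\<^sub>R fst (H i) else 0)" for i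
  define b where "b i = (if \<tau> i = 0 then \<sigma> i * snd (H i) else 0)" for i
  let ?S = "closed_cell H \<sigma>"
  have "(?S \<inter> {y. a i \<bullet> y = b i}) face_of ?S" for i
  proof (rule face_of_Int_supporting_hyperplane_ge[OF convex_closed_cell])
    fix y assume "y \<in> ?S"
    then have "sgn (fst (H i) \<bullet> y - snd (H i)) = 0 \<or> sgn (fst (H i) \<bullet> y - snd (H i)) = \<sigma> i"
      by (simp add: mem_closed_cell sign_le_def sign_vector_def)
    then have "0 \<le> \<sigma> i * (fst (H i) \<bullet> y - snd (H i))"
      by (rule sgn_conforms_imp_nonneg)
    then show "b i \<le> a i \<bullet> y" by (simp add: a_def b_def algebra_simps)
  qed
  then have "(\<Inter>i. ?S \<inter> {y. a i \<bullet> y = b i}) face_of ?S"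
    by (intro face_of_Inter) auto
  moreover have "closed_cell H \<tau> = (\<Inter>i. ?S \<inter> {y. a i \<bullet> y = b i})"
  proof -
    have "sgn (fst (H i) \<bullet> y - snd (H i)) = 0 \<or> sgn (fst (H i) \<bullet> y - snd (H i)) = \<tau> i \<longleftrightarrow>
      (sgn (fst (H i) \<bullet> y - snd (H i)) = 0 \<or> sgn (fst (H i) \<bullet> y - snd (H i)) = \<sigma> i) \<and>
      a i \<bullet> y = b i" for i y
      using assms[unfolded sign_le_def, rule_format, of i]
      by (cases "\<tau> i = 0"; cases "\<sigma> i = 0") (auto simp: a_def b_def sgn_0_0)
    then show ?thesis
      by (auto simp: mem_closed_cell sign_le_def sign_vector_def)
  qed
  ultimately show ?thesis by simp
qed

lemma in_rel_interior_closed_cell: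
  fixes H :: "'i::finite \<Rightarrow> 'v::euclidean_space \<times> real"
  shows "x \<in> rel_interior (closed_cell H (sign_vector H x))"
  unfolding mem_rel_interior_ball
proof (intro conjI)
  let ?C = "closed_cell H (sign_vector H x)"
  show "x \<in> ?C" by (rule sign_vector_mem_closed_cell)
  obtain e where e: "e > 0"
    "\<And>y i. dist y x < e \<Longrightarrow> sign_vector H x i \<noteq> 0 \<Longrightarrow> sign_vector H y i = sign_vector H x i"
    using sign_vector_locally_stable by blast
  define A where "A = (\<Inter>i\<in>{i. sign_vector H x i = 0}. {y. fst (H i) \<bullet> y = snd (H i)})"
  have "affine A" unfolding A_def by (rule affine_Inter) (auto simp: affine_hyperplane)
  moreover have "?C \<subseteq> A"
  proof
    fix y assume "y \<in> ?C"
    then have "sign_vector H y i = 0" if "sign_vector H x i = 0" for i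
      using that by (auto simp: mem_closed_cell sign_le_def)
    then show "y \<in> A" by (auto simp: A_def sign_vector_def sgn_0_0)
  qed
  ultimately have "affine hull ?C \<subseteq> A" by (simp add: hull_minimal)
  moreover have "ball x e \<inter> A \<subseteq> ?C"
  proof
    fix y assume y: "y \<in> ball x e \<inter> A"
    have "sign_vector H y i = sign_vector H x i" for i
    proof (cases "sign_vector H x i = 0")
      case True then show ?thesis using y by (simp add: A_def sign_vector_def)
    next
      case False then show ?thesis using e(2) y by (auto simp: dist_commute)
    qed
    then have "sign_vector H y = sign_vector H x" by (rule ext)
    then show "y \<in> ?C" by (simp add: mem_closed_cell sign_le_refl)
  qed
  ultimately show "\<exists>e>0. ball x e \<inter> affine hull ?C \<subseteq> ?C"
    using e(1) by blast
qed

lemma normal_fan_closed_cell: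
  fixes H :: "'i::finite \<Rightarrow> 'v::euclidean_space \<times> real"
  shows "normal_fan (closed_cell H \<sigma>) =
    cell_normal_cone (\<lambda>i. fst (H i)) \<sigma> ` {\<tau> \<in> range (sign_vector H). sign_le \<tau> \<sigma>}"
proof (intro set_eqI iffI)
  fix N assume "N \<in> normal_fan (closed_cell H \<sigma>)"
  then obtain G x where G: "G face_of closed_cell H \<sigma>" "x \<in> rel_interior G"
    and N: "N = normal_cone_at (closed_cell H \<sigma>) x"
    by (auto simp: normal_fan_def)
  then have x: "x \<in> closed_cell H \<sigma>" using face_of_imp_subset rel_interior_subset by blast
  then show "N \<in> cell_normal_cone (\<lambda>i. fst (H i)) \<sigma> ` {\<tau> \<in> range (sign_vector H). sign_le \<tau> \<sigma>}"
    unfolding N normal_cone_closed_cell[OF x] by (auto simp: mem_closed_cell)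
next
  fix N assume "N \<in> cell_normal_cone (\<lambda>i. fst (H i)) \<sigma> ` {\<tau> \<in> range (sign_vector H). sign_le \<tau> \<sigma>}"
  then obtain x where x: "x \<in> closed_cell H \<sigma>"
    and N: "N = cell_normal_cone (\<lambda>i. fst (H i)) \<sigma> (sign_vector H x)"
    by (auto simp: mem_closed_cell)
  have "closed_cell H (sign_vector H x) face_of closed_cell H \<sigma>"
    using x by (simp add: closed_cell_face_of mem_closed_cell)
  moreover have "closed_cell H (sign_vector H x) \<noteq> {}"
    using sign_vector_mem_closed_cell by blast
  ultimately show "N \<in> normal_fan (closed_cell H \<sigma>)"
    unfolding normal_fan_def N normal_cone_closed_cell[OF x, symmetric]
    using in_rel_interior_closed_cell by blast
qed

lemma normally_equiv_if_same_sign_vectors: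
  fixes H K :: "'i::finite \<Rightarrow> 'v::euclidean_space \<times> real"
  assumes R: "range (sign_vector H) = range (sign_vector K)"
    and normals: "\<And>i. fst (H i) = fst (K i)"
  shows "normally_equiv_arr UNIV H UNIV K"
proof -
  obtain \<Psi> where \<Psi>: "bij_betw \<Psi> (arr_faces UNIV H) (arr_faces UNIV K)"
    "\<forall>F\<in>arr_faces UNIV H. \<forall>G\<in>arr_faces UNIV H. F \<subseteq> G \<longleftrightarrow> \<Psi> F \<subseteq> \<Psi> G"
    "\<forall>\<sigma>\<in>range (sign_vector H). \<Psi> (closed_cell H \<sigma>) = closed_cell K \<sigma>"
    using face_poset_iso[OF R] by blast
  have "normal_fan F = normal_fan (\<Psi> F)" if F: "F \<in> arr_faces UNIV H" for F
  proof -
    obtain \<sigma> where \<sigma>: "\<sigma> \<in> range (sign_vector H)" "F = closed_cell H \<sigma>"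
      using F unfolding arr_faces_UNIV_eq by (rule imageE) simp
    then have "\<Psi> F = closed_cell K \<sigma>" using \<Psi>(3) by blast
    then show ?thesis
      using \<sigma>(2) normal_fan_closed_cell[of H \<sigma>] normal_fan_closed_cell[of K \<sigma>] R normals by simp
  qed
  then show ?thesis unfolding normally_equiv_arr_def using \<Psi>(1,2) by blast
qed

lemma mem_span_if_orthogonal_to_annihilator:
  fixes w :: "'a::euclidean_space"
  assumes "\<And>d. \<forall>x\<in>S. x \<bullet> d = 0 \<Longrightarrow> w \<bullet> d = 0"
  shows "w \<in> span S"
proof -
  obtain y z where y: "y \<in> span S" and z: "\<And>x. x \<in> span S \<Longrightarrow> orthogonal z x" and w: "w = y + z"
    by (rule orthogonal_subspace_decomp_exists[of S w]) auto
  have "\<forall>x\<in>S. x \<bullet> z = 0" using z span_base by (metis orthogonal_def inner_commute)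
  then have "w \<bullet> z = 0" by (rule assms)
  moreover have "y \<bullet> z = 0" using z[OF y] by (simp add: orthogonal_def inner_commute)
  ultimately have "z = 0" using w by (simp add: inner_add_left)
  then show ?thesis using w y by simp
qed

lemma span_image_eq_sum:
  fixes u :: "'m::finite \<Rightarrow> 'v::real_vector"
  assumes "w \<in> span (u ` Z)"
  obtains \<nu> where "w = (\<Sum>i\<in>UNIV. \<nu> i *\<^sub>R u i)" "\<And>i. i \<notin> Z \<Longrightarrow> \<nu> i = 0"
proof -
  from assms have "\<exists>\<nu>. w = (\<Sum>i\<in>UNIV. \<nu> i *\<^sub>R u i) \<and> (\<forall>i. i \<notin> Z \<longrightarrow> \<nu> i = 0)"
  proof (induction rule: span_induct_alt)
    case base
    show ?case by (rule exI[of _ "\<lambda>_. 0"]) simp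
  next
    case (step c x y)
    then obtain k \<nu> where k: "k \<in> Z" "x = u k"
      and \<nu>: "y = (\<Sum>i\<in>UNIV. \<nu> i *\<^sub>R u i)" "\<forall>i. i \<notin> Z \<longrightarrow> \<nu> i = 0" by blast
    have "(\<Sum>i\<in>UNIV. (if i = k then c else 0) *\<^sub>R u i) = c *\<^sub>R x"
      using k(2) by (simp add: if_distrib[of "\<lambda>r. r *\<^sub>R _"] cong: if_cong)
    then have "c *\<^sub>R x + y = (\<Sum>i\<in>UNIV. (\<nu> i + (if i = k then c else 0)) *\<^sub>R u i)"
      by (simp add: \<nu>(1) scaleR_add_left sum.distrib)
    moreover have "\<forall>i. i \<notin> Z \<longrightarrow> \<nu> i + (if i = k then c else 0) = 0" using k \<nu>(2) by auto
    ultimately show ?case by (intro exI[of _ "\<lambda>i. \<nu> i + (if i = k then c else 0)"]) blast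
  qed
  then show ?thesis using that by blast
qed

lemma mem_span_if_bounded_on_solutions:
  fixes u :: "'m \<Rightarrow> 'v::euclidean_space"
  assumes y0: "\<forall>i\<in>Z. u i \<bullet> y0 = c i"
    and bounded: "\<And>y. \<forall>i\<in>Z. u i \<bullet> y = c i \<Longrightarrow> W \<bullet> y \<le> \<beta>"
  shows "W \<in> span (u ` Z)"
proof (rule mem_span_if_orthogonal_to_annihilator)
  fix d assume d: "\<forall>x\<in>u ` Z. x \<bullet> d = 0"
  show "W \<bullet> d = 0"
  proof (rule ccontr)
    assume Wd: "W \<bullet> d \<noteq> 0"
    define t where "t = (\<beta> - W \<bullet> y0 + 1) / (W \<bullet> d)"
    have "\<forall>i\<in>Z. u i \<bullet> (y0 + t *\<^sub>R d) = c i" using y0 d by (simp add: inner_add_right)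
    then have "W \<bullet> (y0 + t *\<^sub>R d) \<le> \<beta>" by (rule bounded)
    moreover have "W \<bullet> (y0 + t *\<^sub>R d) = \<beta> + 1" using Wd by (simp add: t_def inner_add_right)
    ultimately show False by simp
  qed
qed

lemma convex_pos_orthant: "convex {v::real^'m. \<forall>i. 0 < v$i}"
proof -
  have "{v::real^'m. \<forall>i. 0 < v$i} = (\<Inter>i. {v. axis i 1 \<bullet> v > 0})" by (auto simp: inner_axis')
  then show ?thesis by (simp add: convex_INT convex_halfspace_gt)
qed

lemma nonneg_in_closure_pos_orthant:
  fixes v :: "real^'m"
  assumes "\<forall>i. 0 \<le> v$i"
  shows "v \<in> closure {v. \<forall>i. 0 < v$i}"
proof -
  define one :: "real^'m" where "one = (\<chi> i. 1)"
  have one: "one \<in> {v. \<forall>i. 0 < v$i}" by (simp add: one_def)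
  have seg: "open_segment one v \<subseteq> {v. \<forall>i. 0 < v$i}"
  proof
    fix x assume "x \<in> open_segment one v"
    then obtain t where t: "0 < t" "t < 1" "x = (1 - t) *\<^sub>R one + t *\<^sub>R v" by (auto simp: in_segment)
    have "0 \<le> t * v$i" for i using t assms by simp
    then show "x \<in> {v. \<forall>i. 0 < v$i}" using t by (simp add: one_def add_pos_nonneg)
  qed
  show ?thesis
  proof (cases "v = one")
    case True then show ?thesis using one by (simp add: closure_subset[THEN subsetD])
  next
    case False
    then have "v \<in> closure (open_segment one v)" by simp
    then show ?thesis using closure_mono[OF seg] by (rule subsetD[rotated])
  qed
qed

lemma pos_orthant_halfspace:
  fixes a :: "real^'m"
  assumes pos: "\<And>v. \<forall>i. 0 < v$i \<Longrightarrow> \<beta> \<le> a \<bullet> v"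
  shows "\<beta> \<le> 0" "0 \<le> a$k"
proof -
  have "{v. \<forall>i. 0 < v$i} \<subseteq> {v. \<beta> \<le> a \<bullet> v}" using pos by blast
  then have "closure {v. \<forall>i. 0 < v$i} \<subseteq> {v. \<beta> \<le> a \<bullet> v}"
    by (rule closure_minimal) (intro closed_Collect_le continuous_intros)
  then have nonneg: "\<beta> \<le> a \<bullet> v" if "\<forall>i. 0 \<le> v$i" for v
    using nonneg_in_closure_pos_orthant[OF that] by blast
  show "\<beta> \<le> 0" using nonneg[of 0] by simp
  show "0 \<le> a$k"
  proof (rule ccontr)
    assume "\<not> 0 \<le> a$k"
    define t where "t = (\<beta> - 1) / a$k"
    have "0 \<le> t" using \<open>\<not> 0 \<le> a$k\<close> nonneg[of 0] by (simp add: t_def divide_nonpos_neg)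
    then have "\<beta> \<le> a \<bullet> (t *\<^sub>R axis k 1)" by (intro nonneg) (simp add: axis_def)
    also have "\<dots> = \<beta> - 1" using \<open>\<not> 0 \<le> a$k\<close> by (simp add: t_def inner_axis)
    finally show False by simp
  qed
qed

section \<open>Motzkin's transposition theorem\<close>

definition dependency :: "('m::finite \<Rightarrow> 'v::real_vector) \<Rightarrow> ('m \<Rightarrow> real) \<Rightarrow> bool" where
  "dependency u l \<longleftrightarrow> (\<Sum>i\<in>UNIV. l i *\<^sub>R u i) = 0"

text \<open>A Motzkin certificate witnesses that no point has sign vector \<open>s\<close> with respect to the
  hyperplanes \<open>\<langle>u i, x\<rangle> = b i\<close>.\<close>

definition motzkin_certificate ::
  "('m::finite \<Rightarrow> 'v::real_vector) \<Rightarrow> real^'m \<Rightarrow> ('m \<Rightarrow> real) \<Rightarrow> ('m \<Rightarrow> real) \<Rightarrow> bool" where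
  "motzkin_certificate u b s l \<longleftrightarrow> dependency u l \<and> (\<forall>i. s i \<noteq> 0 \<longrightarrow> 0 \<le> l i * s i) \<and>
     (0 < (\<Sum>i\<in>UNIV. l i * b$i) \<or> (\<Sum>i\<in>UNIV. l i * b$i) = 0 \<and> (\<exists>i. s i \<noteq> 0 \<and> l i \<noteq> 0))"

lemma motzkin_certificate_unrealized:
  fixes u :: "'m::finite \<Rightarrow> 'v::euclidean_space"
  assumes cert: "motzkin_certificate u b s l"
  shows "(\<lambda>i. sgn (u i \<bullet> x - b$i)) \<noteq> s"
proof
  assume x: "(\<lambda>i. sgn (u i \<bullet> x - b$i)) = s"
  define f where "f i = u i \<bullet> x - b$i" for i
  have sf: "sgn (f i) = s i" for i using x by (auto simp: f_def)
  have "(\<Sum>i\<in>UNIV. l i * f i) = (\<Sum>i\<in>UNIV. l i *\<^sub>R u i) \<bullet> x - (\<Sum>i\<in>UNIV. l i * b$i)"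
    by (simp add: f_def inner_sum_left right_diff_distrib sum_subtractf)
  then have sum_eq: "(\<Sum>i\<in>UNIV. l i * f i) = - (\<Sum>i\<in>UNIV. l i * b$i)"
    using cert by (simp add: motzkin_certificate_def dependency_def)
  have nonneg: "0 \<le> l i * f i" for i
  proof (cases "s i = 0")
    case True then show ?thesis using sf[of i] by (simp add: sgn_0_0)
  next
    case False
    have "sgn (f i) = sgn (s i)" using sf[of i] by (metis sgn_sgn)
    moreover have "0 \<le> s i * l i" using False cert by (simp add: motzkin_certificate_def mult.commute)
    ultimately have "0 \<le> f i * l i" using sgn_eq_imp_mult_nonneg_iff by blast
    then show ?thesis by (simp add: mult.commute)
  qed
  then have "(\<Sum>i\<in>UNIV. l i * b$i) \<le> 0" using sum_eq sum_nonneg[of UNIV "\<lambda>i. l i * f i"] by simp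
  then obtain i where i: "s i \<noteq> 0" "l i \<noteq> 0" and "(\<Sum>i\<in>UNIV. l i * b$i) = 0"
    using cert by (auto simp: motzkin_certificate_def)
  moreover have "f i \<noteq> 0" using sf[of i] i(1) by (auto simp: sgn_0_0)
  then have "0 < l i * f i" using nonneg[of i] i(2) by (simp add: less_le)
  then have "0 < (\<Sum>i\<in>UNIV. l i * f i)" using nonneg by (intro sum_pos2[of UNIV i]) auto
  ultimately show False using sum_eq by simp
qed

lemma certificate_if_equations_unsolvable:
  fixes u :: "'m::finite \<Rightarrow> 'v::euclidean_space" and b :: "real^'m"
  assumes unsolvable: "\<nexists>y. \<forall>i. s i = 0 \<longrightarrow> u i \<bullet> y = b$i"
  shows "\<exists>l. motzkin_certificate u b s l"
proof -
  define L where "L y = (\<chi> i. if s i = 0 then u i \<bullet> y else 0)" for y :: 'v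
  define z where "z = (\<chi> i. if s i = 0 then b$i else 0)"
  have "linear L" by (rule linearI) (simp_all add: L_def vec_eq_iff inner_add_right)
  then have "span (range L) = range L" by (simp add: linear_subspace_image)
  moreover have "z \<notin> range L"
  proof
    assume "z \<in> range L"
    then obtain y where "z = L y" by blast
    have "u i \<bullet> y = b$i" if "s i = 0" for i
      using arg_cong[OF \<open>z = L y\<close>, of "\<lambda>v. v$i"] that by (simp add: L_def z_def)
    with unsolvable show False by blast
  qed
  ultimately obtain d where d: "\<forall>x\<in>range L. x \<bullet> d = 0" "z \<bullet> d \<noteq> 0"
    using mem_span_if_orthogonal_to_annihilator[of "range L" z] by blast
  define \<mu> where "\<mu> = z \<bullet> d"
  define l where "l i = (if s i = 0 then \<mu> * d$i else 0)" for i
  have Ld: "L y \<bullet> d = (\<Sum>i\<in>UNIV. (if s i = 0 then u i \<bullet> y else 0) * d$i)" for y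
    by (simp add: inner_vec_def L_def)
  have "(\<Sum>i\<in>UNIV. l i *\<^sub>R u i) \<bullet> y = \<mu> * (L y \<bullet> d)" for y
    unfolding inner_sum_left Ld sum_distrib_left by (intro sum.cong) (simp_all add: l_def)
  then have dep: "dependency u l"
    using d(1) unfolding dependency_def by (metis inner_eq_zero_iff mult_zero_right rangeI)
  have "(\<Sum>i\<in>UNIV. l i * b$i) = \<mu> * (\<Sum>i\<in>UNIV. (if s i = 0 then b$i else 0) * d$i)"
    unfolding sum_distrib_left by (intro sum.cong) (simp_all add: l_def)
  also have "\<dots> = \<mu> * \<mu>" by (simp add: \<mu>_def z_def inner_vec_def)
  finally have "0 < (\<Sum>i\<in>UNIV. l i * b$i)" using d(2) by (simp add: \<mu>_def zero_less_mult_iff) linarith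
  then have "motzkin_certificate u b s l"
    using dep by (simp add: motzkin_certificate_def l_def)
  then show ?thesis by blast
qed

text \<open>Solutions of the equations \<open>\<langle>u i, y\<rangle> = b i\<close> (\<open>s i = 0\<close>) are mapped into
  \<open>\<real>\<^sup>m\<close> so that the strict sign conditions (\<open>s i \<noteq> 0\<close>) become positivity of coordinates.\<close>

definition orthant_map :: "('m::finite \<Rightarrow> 'v::real_inner) \<Rightarrow> real^'m \<Rightarrow> ('m \<Rightarrow> real) \<Rightarrow> 'v \<Rightarrow> real^'m"
  where "orthant_map u b s y = (\<chi> i. if s i = 0 then 1 else s i * (u i \<bullet> y - b$i))"

lemma orthant_map_pos_imp_sign_vector:
  assumes s: "\<forall>i. s i = -1 \<or> s i = 0 \<or> s i = 1"
    and y: "\<forall>i. s i = 0 \<longrightarrow> u i \<bullet> y = b$i" and pos: "\<forall>i. 0 < orthant_map u b s y $ i"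
  shows "(\<lambda>i. sgn (u i \<bullet> y - b$i)) = s"
proof
  fix i
  show "sgn (u i \<bullet> y - b$i) = s i"
  proof (cases "s i = 0")
    case True then show ?thesis using y by simp
  next
    case False then show ?thesis
      using pos[rule_format, of i] s sgn_eq_iff_pos_mult by (auto simp: orthant_map_def)
  qed
qed

lemma orthant_separator_if_unrealized:
  fixes u :: "'m::finite \<Rightarrow> 'v::euclidean_space" and b :: "real^'m"
  assumes unrealized: "\<forall>x. (\<lambda>i. sgn (u i \<bullet> x - b$i)) \<noteq> s"
    and s: "\<forall>i. s i = -1 \<or> s i = 0 \<or> s i = 1"
    and y0: "\<forall>i. s i = 0 \<longrightarrow> u i \<bullet> y0 = b$i"
  obtains a :: "real^'m" where "a \<noteq> 0" "\<And>i. 0 \<le> a$i"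
    "\<And>y. \<forall>i. s i = 0 \<longrightarrow> u i \<bullet> y = b$i \<Longrightarrow> a \<bullet> orthant_map u b s y \<le> 0"
proof -
  define Y where "Y = {y. \<forall>i. s i = 0 \<longrightarrow> u i \<bullet> y = b$i}"
  define T where "T = {v::real^'m. \<forall>i. 0 < v$i}"
  define \<phi>0 :: "real^'m" where "\<phi>0 = (\<chi> i. if s i = 0 then 1 else - (s i * b$i))"
  define L where "L y = (\<chi> i. if s i = 0 then 0 else s i * (u i \<bullet> y))" for y
  have \<phi>: "orthant_map u b s y = \<phi>0 + L y" for y
    by (simp add: orthant_map_def vec_eq_iff \<phi>0_def L_def algebra_simps)
  have "linear L" by (rule linearI) (simp_all add: L_def vec_eq_iff inner_add_right algebra_simps)
  moreover have "Y = (\<Inter>i\<in>{i. s i = 0}. {y. u i \<bullet> y = b$i})" by (auto simp: Y_def)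
  then have "convex Y" by (simp add: convex_INT convex_hyperplane)
  ultimately have convex_image: "convex ((+) \<phi>0 ` L ` Y)"
    by (intro convex_translation convex_linear_image)
  have convex_T: "convex T" unfolding T_def by (rule convex_pos_orthant)
  have nonempty_image: "(+) \<phi>0 ` L ` Y \<noteq> {}" using y0 by (auto simp: Y_def)
  have "(\<chi> i. 1) \<in> T" by (simp add: T_def)
  then have nonempty_T: "T \<noteq> {}" by blast
  have "\<phi>0 + L y \<notin> T" if "y \<in> Y" for y
  proof
    assume "\<phi>0 + L y \<in> T"
    then have "\<forall>i. 0 < orthant_map u b s y $ i" by (simp add: T_def \<phi>)
    with that have "(\<lambda>i. sgn (u i \<bullet> y - b$i)) = s"
      unfolding Y_def by (intro orthant_map_pos_imp_sign_vector[OF s]) auto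
    with unrealized show False by blast
  qed
  then have "(+) \<phi>0 ` L ` Y \<inter> T = {}" by blast
  then obtain a \<beta> where a: "a \<noteq> 0" and below: "\<forall>x\<in>(+) \<phi>0 ` L ` Y. a \<bullet> x \<le> \<beta>"
    and above: "\<forall>x\<in>T. \<beta> \<le> a \<bullet> x"
    using separating_hyperplane_sets[OF convex_image convex_T nonempty_image nonempty_T] by blast
  have above': "\<beta> \<le> a \<bullet> v" if "\<forall>i. 0 < v$i" for v using above that by (simp add: T_def)
  show ?thesis
  proof (rule that)
    show "a \<noteq> 0" by (fact a)
    show "0 \<le> a$i" for i by (rule pos_orthant_halfspace(2)[OF above'])
    fix y assume "\<forall>i. s i = 0 \<longrightarrow> u i \<bullet> y = b$i"
    then have "a \<bullet> orthant_map u b s y \<le> \<beta>" using below by (simp add: Y_def \<phi>)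
    then show "a \<bullet> orthant_map u b s y \<le> 0" using pos_orthant_halfspace(1)[OF above'] by simp
  qed
qed

lemma inner_orthant_map:
  "a \<bullet> orthant_map u b s y =
     (\<Sum>i\<in>UNIV. if s i = 0 then a$i else 0)
     + (\<Sum>i\<in>UNIV. (if s i = 0 then 0 else a$i * s i) *\<^sub>R u i) \<bullet> y
     - (\<Sum>i\<in>UNIV. if s i = 0 then 0 else a$i * s i * b$i)"
proof -
  have "a \<bullet> orthant_map u b s y =
    (\<Sum>i\<in>UNIV. (if s i = 0 then a$i else 0) + (if s i = 0 then 0 else a$i * s i) * (u i \<bullet> y)
      - (if s i = 0 then 0 else a$i * s i * b$i))"
    unfolding inner_vec_def orthant_map_def by (intro sum.cong) (auto simp: algebra_simps)
  then show ?thesis by (simp add: inner_sum_left sum.distrib sum_subtractf)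
qed

text \<open>The coefficients of the separator on the strict coordinates, together with the
  combination of the equations that the separator induces on the solution set, form the
  certificate.\<close>

lemma certificate_from_orthant_separator:
  fixes u :: "'m::finite \<Rightarrow> 'v::euclidean_space" and b :: "real^'m"
  assumes s: "\<forall>i. s i = -1 \<or> s i = 0 \<or> s i = 1"
    and y0: "\<forall>i. s i = 0 \<longrightarrow> u i \<bullet> y0 = b$i"
    and a: "a \<noteq> 0" "\<And>i. 0 \<le> a$i"
    and sep: "\<And>y. \<forall>i. s i = 0 \<longrightarrow> u i \<bullet> y = b$i \<Longrightarrow> a \<bullet> orthant_map u b s y \<le> 0"
  shows "\<exists>l. motzkin_certificate u b s l"
proof -
  define W where "W = (\<Sum>i\<in>UNIV. (if s i = 0 then 0 else a$i * s i) *\<^sub>R u i)"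
  define cZ where "cZ = (\<Sum>i\<in>UNIV. if s i = 0 then a$i else 0)"
  define cB where "cB = (\<Sum>i\<in>UNIV. if s i = 0 then 0 else a$i * s i * b$i)"
  have bounded: "W \<bullet> y \<le> cB - cZ" if "\<forall>i\<in>{i. s i = 0}. u i \<bullet> y = b$i" for y
    using sep[of y] that by (simp add: inner_orthant_map W_def cZ_def cB_def)
  have "W \<in> span (u ` {i. s i = 0})"
    using y0 by (intro mem_span_if_bounded_on_solutions[OF _ bounded]) auto
  then obtain \<nu> where \<nu>: "W = (\<Sum>i\<in>UNIV. \<nu> i *\<^sub>R u i)" "\<And>i. s i \<noteq> 0 \<Longrightarrow> \<nu> i = 0"
    by (rule span_image_eq_sum) auto
  define l where "l i = (if s i = 0 then - \<nu> i else a$i * s i)" for i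
  have "(\<Sum>i\<in>UNIV. l i *\<^sub>R u i) = W - (\<Sum>i\<in>UNIV. \<nu> i *\<^sub>R u i)"
    unfolding W_def sum_subtractf[symmetric] by (intro sum.cong) (auto simp: l_def \<nu>(2))
  then have dep: "dependency u l" by (simp add: dependency_def \<nu>(1))
  have "W \<bullet> y0 = (\<Sum>i\<in>UNIV. \<nu> i * b$i)"
    unfolding \<nu>(1) inner_sum_left
    by (intro sum.cong refl) (metis inner_scaleR_left y0 \<nu>(2) mult_zero_left)
  moreover have "(\<Sum>i\<in>UNIV. l i * b$i) = cB - (\<Sum>i\<in>UNIV. \<nu> i * b$i)"
    unfolding cB_def sum_subtractf[symmetric] by (intro sum.cong) (auto simp: l_def \<nu>(2))
  ultimately have lb: "cZ \<le> (\<Sum>i\<in>UNIV. l i * b$i)" using bounded[of y0] y0 by simp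
  have signs: "\<forall>i. s i \<noteq> 0 \<longrightarrow> 0 \<le> l i * s i"
  proof (intro allI impI)
    fix i assume "s i \<noteq> 0"
    then have "s i * s i = 1" using s[rule_format, of i] by (elim disjE) simp_all
    with \<open>s i \<noteq> 0\<close> have "l i * s i = a$i" by (simp add: l_def mult.assoc)
    then show "0 \<le> l i * s i" using a(2) by simp
  qed
  show ?thesis
  proof (cases "0 < (\<Sum>i\<in>UNIV. l i * b$i)")
    case True
    then show ?thesis using dep signs by (auto simp: motzkin_certificate_def)
  next
    case False
    have "0 \<le> cZ" unfolding cZ_def using a(2) by (intro sum_nonneg) auto
    then have "(\<Sum>i\<in>UNIV. l i * b$i) = 0" "cZ = 0" using lb False by linarith+
    then have "\<forall>i. s i = 0 \<longrightarrow> a$i = 0"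
      using sum_nonneg_eq_0_iff[of UNIV "\<lambda>i. if s i = 0 then a$i else 0"] a(2)
      by (auto simp: cZ_def split: if_splits)
    moreover obtain k where "a$k \<noteq> 0" using a(1) by (metis vec_eq_iff zero_index)
    ultimately have "s k \<noteq> 0" "l k \<noteq> 0" using s by (auto simp: l_def)
    then show ?thesis using dep signs \<open>(\<Sum>i\<in>UNIV. l i * b$i) = 0\<close>
      by (auto simp: motzkin_certificate_def)
  qed
qed

theorem motzkin_alternative:
  fixes u :: "'m::finite \<Rightarrow> 'v::euclidean_space" and b :: "real^'m"
  assumes s: "\<forall>i. s i = -1 \<or> s i = 0 \<or> s i = 1"
  shows "(\<forall>x. (\<lambda>i. sgn (u i \<bullet> x - b$i)) \<noteq> s) \<longleftrightarrow> (\<exists>l. motzkin_certificate u b s l)"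
proof
  assume unrealized: "\<forall>x. (\<lambda>i. sgn (u i \<bullet> x - b$i)) \<noteq> s"
  show "\<exists>l. motzkin_certificate u b s l"
  proof (cases "\<exists>y0. \<forall>i. s i = 0 \<longrightarrow> u i \<bullet> y0 = b$i")
    case True
    then obtain y0 where y0: "\<forall>i. s i = 0 \<longrightarrow> u i \<bullet> y0 = b$i" by blast
    obtain a where "a \<noteq> 0" "\<And>i. 0 \<le> a$i"
      "\<And>y. \<forall>i. s i = 0 \<longrightarrow> u i \<bullet> y = b$i \<Longrightarrow> a \<bullet> orthant_map u b s y \<le> 0"
      using orthant_separator_if_unrealized[OF unrealized s y0] by blast
    then show ?thesis using certificate_from_orthant_separator[OF s y0] by blast
  next
    case False
    then show ?thesis by (rule certificate_if_equations_unsolvable)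
  qed
qed (use motzkin_certificate_unrealized in blast)

section \<open>Certificates supported on circuits\<close>

lemma dependency_diff:
  assumes "dependency u l" "dependency u m"
  shows "dependency u (\<lambda>i. l i - t * m i)"
proof -
  have "(\<Sum>i\<in>UNIV. (l i - t * m i) *\<^sub>R u i) = (\<Sum>i\<in>UNIV. l i *\<^sub>R u i) - t *\<^sub>R (\<Sum>i\<in>UNIV. m i *\<^sub>R u i)"
    by (simp add: scaleR_diff_left sum_subtractf scaleR_sum_right)
  then show ?thesis using assms by (simp add: dependency_def)
qed

lemma dependency_scale:
  assumes "dependency u l"
  shows "dependency u (\<lambda>i. t * l i)"
proof -
  have "(\<Sum>i\<in>UNIV. (t * l i) *\<^sub>R u i) = t *\<^sub>R (\<Sum>i\<in>UNIV. l i *\<^sub>R u i)"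
    by (simp add: scaleR_sum_right)
  then show ?thesis using assms by (simp add: dependency_def)
qed

lemma dependency_sum_support:
  assumes "dependency u l" "{i. l i \<noteq> 0} \<subseteq> D"
  shows "(\<Sum>i\<in>D. l i *\<^sub>R u i) = 0"
proof -
  have "(\<Sum>i\<in>D. l i *\<^sub>R u i) = (\<Sum>i\<in>UNIV. l i *\<^sub>R u i)"
    using assms(2) by (intro sum.mono_neutral_left) auto
  then show ?thesis using assms(1) by (simp add: dependency_def)
qed

lemma circuit_nonempty: "circuit u C \<Longrightarrow> C \<noteq> {}"
  by (auto simp: circuit_def indep_family_def)

lemma circuit_vector_dependency:
  assumes "circuit_vectors u c" "circuit u C"
  shows "dependency u (\<lambda>i. c C $ i)" "c C $ i \<noteq> 0 \<longleftrightarrow> i \<in> C"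
  using assms by (auto simp: circuit_vectors_def dependency_def)

lemma dependency_on_circuit:
  assumes cv: "circuit_vectors u c" and C: "circuit u C"
    and l: "dependency u l" "{i. l i \<noteq> 0} \<subseteq> C"
  obtains \<kappa> where "\<And>i. l i = \<kappa> * c C $ i"
proof -
  obtain j where j: "j \<in> C" using circuit_nonempty[OF C] by blast
  have cj: "c C $ j \<noteq> 0" using circuit_vector_dependency[OF cv C] j by simp
  define \<kappa> where "\<kappa> = l j / c C $ j"
  define m where "m i = l i - \<kappa> * c C $ i" for i
  have dm: "dependency u m"
    unfolding m_def by (rule dependency_diff[OF l(1) circuit_vector_dependency(1)[OF cv C]])
  have "m j = 0" using cj by (simp add: m_def \<kappa>_def)
  moreover have "m i = 0" if "i \<notin> C" for i
    using that l(2) circuit_vector_dependency(2)[OF cv C, of i] by (auto simp: m_def)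
  ultimately have ms: "{i. m i \<noteq> 0} \<subseteq> C - {j}" by auto
  have "indep_family u (C - {j})" using C j by (auto simp: circuit_def)
  then have "\<forall>i\<in>C - {j}. m i = 0"
    using dependency_sum_support[OF dm ms] by (simp add: indep_family_def)
  then have "m i = 0" for i using ms by blast
  then have "l i = \<kappa> * c C $ i" for i by (simp add: m_def)
  then show ?thesis by (rule that)
qed

lemma dependency_on_proper_subset:
  assumes l: "dependency u l" "\<exists>i. l i \<noteq> 0" and not_circuit: "\<not> circuit u {i. l i \<noteq> 0}"
  obtains m where "dependency u m" "{i. m i \<noteq> 0} \<subset> {i. l i \<noteq> 0}" "\<exists>j. 0 < l j * m j"
proof -
  let ?D = "{i. l i \<noteq> 0}"
  have "\<not> indep_family u ?D"
  proof
    assume "indep_family u ?D"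
    then have "\<forall>i\<in>?D. l i = 0"
      using dependency_sum_support[OF l(1) order_refl] unfolding indep_family_def by blast
    then show False using l(2) by blast
  qed
  then obtain E where E: "E \<subset> ?D" "\<not> indep_family u E"
    using not_circuit by (auto simp: circuit_def)
  then obtain m0 j where m0: "(\<Sum>i\<in>E. m0 i *\<^sub>R u i) = 0" "j \<in> E" "m0 j \<noteq> 0"
    by (auto simp: indep_family_def)
  define \<epsilon> where "\<epsilon> = sgn (l j * m0 j)"
  define m where "m i = (if i \<in> E then \<epsilon> * m0 i else 0)" for i
  have "(\<Sum>i\<in>UNIV. m i *\<^sub>R u i) = \<epsilon> *\<^sub>R (\<Sum>i\<in>E. m0 i *\<^sub>R u i)"
    by (simp add: m_def if_distrib[of "\<lambda>r. r *\<^sub>R _"] sum.If_cases scaleR_sum_right)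
  then have "dependency u m" using m0(1) by (simp add: dependency_def)
  moreover have "{i. m i \<noteq> 0} \<subset> ?D" using E by (auto simp: m_def)
  moreover have "l j * m0 j \<noteq> 0" using E(1) m0(2,3) by auto
  then have "0 < sgn (l j * m0 j) * (l j * m0 j)" by (rule sgn_mult_self_pos)
  then have "0 < l j * m j" using m0(2) by (simp add: m_def \<epsilon>_def ac_simps)
  ultimately show ?thesis using that by blast
qed

text \<open>The step \<open>t\<close> is the first time at which a coordinate of \<open>l - t m\<close> vanishes.\<close>

lemma shrink_along:
  fixes l m :: "'m::finite \<Rightarrow> real"
  assumes support: "{i. m i \<noteq> 0} \<subseteq> {i. l i \<noteq> 0}" and pos: "\<exists>i. 0 < l i * m i"
  obtains t where "t > 0" "sign_le (sgn \<circ> (\<lambda>i. l i - t * m i)) (sgn \<circ> l)"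
    "card {i. l i - t * m i \<noteq> 0} < card {i. l i \<noteq> 0}"
proof -
  define A where "A = {i. 0 < l i * m i}"
  define t where "t = Min ((\<lambda>i. l i / m i) ` A)"
  have A: "finite A" "A \<noteq> {}" using pos by (auto simp: A_def)
  then obtain k where k: "k \<in> A" "t = l k / m k" unfolding t_def
    by (metis (no_types, lifting) Min_in finite_imageI image_iff image_is_empty)
  have ratio_pos: "0 < l i / m i" if "i \<in> A" for i
    using that by (auto simp: A_def zero_less_mult_iff zero_less_divide_iff)
  have t_le: "t \<le> l i / m i" if "i \<in> A" for i
    unfolding t_def using A that by (intro Min_le) auto
  have t: "t > 0" using ratio_pos k by simp
  have same_sign: "sgn (l i - t * m i) = 0 \<or> sgn (l i - t * m i) = sgn (l i)" for i
    using support t_le by (intro sgn_diff_conforms[OF t]) (auto simp: A_def)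
  have "{i. l i - t * m i \<noteq> 0} \<subset> {i. l i \<noteq> 0}"
  proof
    show "{i. l i - t * m i \<noteq> 0} \<subseteq> {i. l i \<noteq> 0}"
    proof
      fix i assume "i \<in> {i. l i - t * m i \<noteq> 0}"
      then show "i \<in> {i. l i \<noteq> 0}" using same_sign[of i] by (auto simp: sgn_0_0)
    qed
    have "l k - t * m k = 0" "l k \<noteq> 0" using k by (auto simp: A_def)
    then show "{i. l i - t * m i \<noteq> 0} \<noteq> {i. l i \<noteq> 0}" by blast
  qed
  then have "card {i. l i - t * m i \<noteq> 0} < card {i. l i \<noteq> 0}" by (simp add: psubset_card_mono)
  with t same_sign show ?thesis by (intro that) (auto simp: sign_le_def)
qed

lemma exists_conformal_circuit:
  assumes cv: "circuit_vectors u c"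
  shows "dependency u l \<Longrightarrow> \<exists>i. l i \<noteq> 0 \<Longrightarrow>
    \<exists>C \<kappa>. circuit u C \<and> \<kappa> \<noteq> 0 \<and> sign_le (sgn \<circ> (\<lambda>i. \<kappa> * c C $ i)) (sgn \<circ> l)"
proof (induction "card {i. l i \<noteq> 0}" arbitrary: l rule: less_induct)
  case less
  show ?case
  proof (cases "circuit u {i. l i \<noteq> 0}")
    case True
    then obtain \<kappa> where "\<And>i. l i = \<kappa> * c {i. l i \<noteq> 0} $ i"
      using dependency_on_circuit[OF cv _ less.prems(1) order_refl] by blast
    then have l: "(\<lambda>i. \<kappa> * c {i. l i \<noteq> 0} $ i) = l" by (rule ext[symmetric])
    then have "\<kappa> \<noteq> 0" using less.prems(2) by force
    with True l show ?thesis by (intro exI[of _ "{i. l i \<noteq> 0}"] exI[of _ \<kappa>]) (simp add: sign_le_refl)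
  next
    case False
    obtain m where m: "dependency u m" "{i. m i \<noteq> 0} \<subset> {i. l i \<noteq> 0}" "\<exists>j. 0 < l j * m j"
      using dependency_on_proper_subset[OF less.prems False] by blast
    obtain t where t: "sign_le (sgn \<circ> (\<lambda>i. l i - t * m i)) (sgn \<circ> l)"
      "card {i. l i - t * m i \<noteq> 0} < card {i. l i \<noteq> 0}"
      using shrink_along[OF psubset_imp_subset[OF m(2)] m(3)] by blast
    obtain i0 where "l i0 \<noteq> 0" "m i0 = 0" using m(2) by blast
    then have "\<exists>i. l i - t * m i \<noteq> 0" by (intro exI[of _ i0]) simp
    then obtain C \<kappa> where C: "circuit u C" "\<kappa> \<noteq> 0"
      "sign_le (sgn \<circ> (\<lambda>i. \<kappa> * c C $ i)) (sgn \<circ> (\<lambda>i. l i - t * m i))"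
      using less.hyps[OF t(2)] dependency_diff[OF less.prems(1) m(1)] by blast
    have "sign_le (sgn \<circ> (\<lambda>i. \<kappa> * c C $ i)) (sgn \<circ> l)" by (rule sign_le_trans[OF C(3) t(1)])
    with C(1,2) show ?thesis by blast
  qed
qed

lemma conformal_sign_condition:
  assumes "sign_le (sgn \<circ> g) (sgn \<circ> l)" "0 \<le> l i * s"
  shows "0 \<le> g i * s"
proof (cases "g i = 0")
  case False
  then have "sgn (g i) = sgn (l i)" using assms(1) by (auto simp: sign_le_def sgn_0_0)
  then show ?thesis using assms(2) sgn_eq_imp_mult_nonneg_iff by blast
qed simp

lemma motzkin_certificate_shrink:
  assumes cert: "motzkin_certificate u b s l" and g: "dependency u g"
    and conformal: "sign_le (sgn \<circ> g) (sgn \<circ> l)" and not_cert: "\<not> motzkin_certificate u b s g"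
    and t: "t > 0" "sign_le (sgn \<circ> (\<lambda>i. l i - t * g i)) (sgn \<circ> l)"
  shows "motzkin_certificate u b s (\<lambda>i. l i - t * g i)"
proof -
  have signs: "\<forall>i. s i \<noteq> 0 \<longrightarrow> 0 \<le> l i * s i" using cert by (simp add: motzkin_certificate_def)
  then have "\<forall>i. s i \<noteq> 0 \<longrightarrow> 0 \<le> g i * s i" using conformal_sign_condition[OF conformal] by blast
  then have g_b: "(\<Sum>i\<in>UNIV. g i * b$i) \<le> 0"
    "(\<Sum>i\<in>UNIV. g i * b$i) = 0 \<Longrightarrow> \<forall>i. s i \<noteq> 0 \<longrightarrow> g i = 0"
    using not_cert g by (auto simp: motzkin_certificate_def not_less)
  have sum_eq: "(\<Sum>i\<in>UNIV. (l i - t * g i) * b$i) = (\<Sum>i\<in>UNIV. l i * b$i) - t * (\<Sum>i\<in>UNIV. g i * b$i)"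
    by (simp add: left_diff_distrib sum_subtractf sum_distrib_left mult.assoc)
  have "0 \<le> t * (\<Sum>i\<in>UNIV. g i * b$i) \<longleftrightarrow> (\<Sum>i\<in>UNIV. g i * b$i) = 0"
    using t(1) g_b(1) by (auto simp: zero_le_mult_iff)
  then have "0 < (\<Sum>i\<in>UNIV. (l i - t * g i) * b$i) \<or>
      (\<Sum>i\<in>UNIV. (l i - t * g i) * b$i) = 0 \<and> (\<exists>i. s i \<noteq> 0 \<and> l i - t * g i \<noteq> 0)"
    using cert g_b sum_eq t(1) by (auto simp: motzkin_certificate_def mult_pos_neg)
  moreover have "dependency u (\<lambda>i. l i - t * g i)"
    using cert g by (simp add: motzkin_certificate_def dependency_diff)
  ultimately show ?thesis
    using signs conformal_sign_condition[OF t(2)] by (simp add: motzkin_certificate_def)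
qed

lemma exists_circuit_certificate:
  assumes cv: "circuit_vectors u c"
  shows "motzkin_certificate u b s l \<Longrightarrow>
    \<exists>C \<kappa>. circuit u C \<and> motzkin_certificate u b s (\<lambda>i. \<kappa> * c C $ i)"
proof (induction "card {i. l i \<noteq> 0}" arbitrary: l rule: less_induct)
  case less
  have dep: "dependency u l" using less.prems by (simp add: motzkin_certificate_def)
  have "\<exists>i. l i \<noteq> 0"
  proof (rule ccontr)
    assume "\<nexists>i. l i \<noteq> 0"
    then show False using less.prems by (simp add: motzkin_certificate_def)
  qed
  with dep obtain C \<kappa> where C: "circuit u C" "\<kappa> \<noteq> 0"
    and conformal: "sign_le (sgn \<circ> (\<lambda>i. \<kappa> * c C $ i)) (sgn \<circ> l)"
    using exists_conformal_circuit[OF cv] by blast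
  define g where "g = (\<lambda>i. \<kappa> * c C $ i)"
  show ?case
  proof (cases "motzkin_certificate u b s g")
    case True
    then show ?thesis using C unfolding g_def by blast
  next
    case False
    have conformal_g: "g i = 0 \<or> sgn (g i) = sgn (l i)" for i
      using conformal[folded g_def] by (auto simp: sign_le_def sgn_0_0)
    then have support: "{i. g i \<noteq> 0} \<subseteq> {i. l i \<noteq> 0}" by (metis (mono_tags) Collect_mono sgn_0_0)
    obtain j where "j \<in> C" using circuit_nonempty[OF C(1)] by blast
    then have "g j \<noteq> 0" using circuit_vector_dependency(2)[OF cv C(1), of j] C(2) by (simp add: g_def)
    then have "0 < l j * g j" using conformal_g[of j]
      by (auto simp: sgn_if zero_less_mult_iff split: if_splits)
    then obtain t where t: "t > 0" "sign_le (sgn \<circ> (\<lambda>i. l i - t * g i)) (sgn \<circ> l)"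
      "card {i. l i - t * g i \<noteq> 0} < card {i. l i \<noteq> 0}"
      using shrink_along[OF support] by blast
    have "dependency u g"
      unfolding g_def by (rule dependency_scale[OF circuit_vector_dependency(1)[OF cv C(1)]])
    then have "motzkin_certificate u b s (\<lambda>i. l i - t * g i)"
      using motzkin_certificate_shrink[OF less.prems _ conformal[folded g_def] False t(1,2)] by blast
    then show ?thesis using less.hyps[OF t(3)] by blast
  qed
qed

lemma motzkin_certificate_transfer:
  fixes w :: "real^'m::finite"
  assumes signs: "sgn (w \<bullet> a) = sgn (w \<bullet> b)" and cert: "motzkin_certificate u b s (\<lambda>i. \<kappa> * w$i)"
  shows "motzkin_certificate u a s (\<lambda>i. \<kappa> * w$i)"
proof -
  have sum: "(\<Sum>i\<in>UNIV. \<kappa> * w$i * v$i) = \<kappa> * (w \<bullet> v)" for v :: "real^'m"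
    by (simp add: inner_vec_def sum_distrib_left mult.assoc)
  have "sgn (\<kappa> * (w \<bullet> a)) = sgn (\<kappa> * (w \<bullet> b))" using signs by (simp add: sgn_mult)
  then have "0 < \<kappa> * (w \<bullet> a) \<longleftrightarrow> 0 < \<kappa> * (w \<bullet> b)" "\<kappa> * (w \<bullet> a) = 0 \<longleftrightarrow> \<kappa> * (w \<bullet> b) = 0"
    by (metis sgn_greater, metis sgn_0_0)
  then show ?thesis using cert unfolding motzkin_certificate_def sum by simp
qed

lemma sign_vector_par_trans: "sign_vector (par_trans u a) x = (\<lambda>i. sgn (u i \<bullet> x - a$i))"
  by (simp add: sign_vector_def par_trans_def)

lemma sign_vectors_par_trans_subset:
  fixes u :: "'m::finite \<Rightarrow> real^'n"
  assumes cv: "circuit_vectors u c" and signs: "\<And>C. circuit u C \<Longrightarrow> sgn (c C \<bullet> a) = sgn (c C \<bullet> b)"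
  shows "range (sign_vector (par_trans u a)) \<subseteq> range (sign_vector (par_trans u b))"
proof
  fix \<sigma> assume "\<sigma> \<in> range (sign_vector (par_trans u a))"
  then obtain x where x: "(\<lambda>i. sgn (u i \<bullet> x - a$i)) = \<sigma>" by (auto simp: sign_vector_par_trans)
  show "\<sigma> \<in> range (sign_vector (par_trans u b))"
  proof (rule ccontr)
    assume "\<sigma> \<notin> range (sign_vector (par_trans u b))"
    then have "\<forall>y. (\<lambda>i. sgn (u i \<bullet> y - b$i)) \<noteq> \<sigma>" by (auto simp: sign_vector_par_trans)
    moreover have "\<forall>i. \<sigma> i = -1 \<or> \<sigma> i = 0 \<or> \<sigma> i = 1" using x sgn_real_cases by auto
    ultimately obtain l where "motzkin_certificate u b \<sigma> l" using motzkin_alternative by blast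
    then obtain C \<kappa> where "circuit u C" "motzkin_certificate u b \<sigma> (\<lambda>i. \<kappa> * c C $ i)"
      using exists_circuit_certificate[OF cv] by blast
    then have "motzkin_certificate u a \<sigma> (\<lambda>i. \<kappa> * c C $ i)"
      using motzkin_certificate_transfer signs by blast
    then show False using motzkin_certificate_unrealized x by blast
  qed
qed

lemma sign_vector_coning:
  "sign_vector (coning u a) p =
     (\<lambda>j. case j of None \<Rightarrow> sgn (snd p) | Some i \<Rightarrow> sgn (u i \<bullet> fst p + a$i * snd p))"
  by (rule ext, simp add: sign_vector_def coning_def inner_prod_def split: option.split)

lemma sign_vector_elem_lift: "sign_vector (elem_lift u a) p = (\<lambda>i. sgn (u i \<bullet> fst p + a$i * snd p))"
  by (simp add: sign_vector_def elem_lift_def inner_prod_def)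

text \<open>For \<open>t \<noteq> 0\<close> the signs of \<open>\<langle>u i, x\<rangle> + a i * t\<close> are those of the point \<open>-x/t\<close> of
  \<open>\<A>\<^sub>a\<close>, flipped by \<open>sgn t\<close>.\<close>

lemma homogenized_sign_transfer:
  fixes u :: "'m::finite \<Rightarrow> real^'n"
  assumes R: "range (sign_vector (par_trans u a)) \<subseteq> range (sign_vector (par_trans u b))"
  obtains x' t' where "sgn t' = sgn t" "\<And>i. sgn (u i \<bullet> x' + b$i * t') = sgn (u i \<bullet> x + a$i * t)"
proof (cases "t = 0")
  case True
  then show ?thesis by (intro that[of 0 x]) simp_all
next
  case False
  define y where "y = (- 1 / t) *\<^sub>R x"
  have ea: "u i \<bullet> x + a$i * t = (- t) * (u i \<bullet> y - a$i)" for i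
    using False by (simp add: y_def algebra_simps)
  have "sign_vector (par_trans u a) y \<in> range (sign_vector (par_trans u b))" using R by blast
  then obtain z where "sign_vector (par_trans u b) z = sign_vector (par_trans u a) y" by auto
  then have z: "sgn (u i \<bullet> z - b$i) = sgn (u i \<bullet> y - a$i)" for i
    unfolding sign_vector_par_trans by metis
  have eb: "u i \<bullet> ((- sgn t) *\<^sub>R z) + b$i * sgn t = (- sgn t) * (u i \<bullet> z - b$i)" for i
    by (simp add: algebra_simps)
  show ?thesis
  proof (rule that[of "sgn t" "(- sgn t) *\<^sub>R z"])
    show "sgn (u i \<bullet> ((- sgn t) *\<^sub>R z) + b$i * sgn t) = sgn (u i \<bullet> x + a$i * t)" for i
      unfolding ea eb sgn_mult z by simp
  qed simp
qed

lemma sign_vectors_coning_subset: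
  fixes u :: "'m::finite \<Rightarrow> real^'n"
  assumes "range (sign_vector (par_trans u a)) \<subseteq> range (sign_vector (par_trans u b))"
  shows "range (sign_vector (coning u a)) \<subseteq> range (sign_vector (coning u b))"
proof
  fix \<sigma> assume "\<sigma> \<in> range (sign_vector (coning u a))"
  then obtain x t where \<sigma>: "\<sigma> = sign_vector (coning u a) (x, t)" by auto
  obtain x' t' where "sgn t' = sgn t" "\<And>i. sgn (u i \<bullet> x' + b$i * t') = sgn (u i \<bullet> x + a$i * t)"
    using homogenized_sign_transfer[OF assms] by blast
  then have "sign_vector (coning u b) (x', t') = \<sigma>"
    unfolding \<sigma> sign_vector_coning by (auto split: option.split)
  then show "\<sigma> \<in> range (sign_vector (coning u b))" by (metis rangeI)
qed

lemma sign_vectors_elem_lift_subset: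
  fixes u :: "'m::finite \<Rightarrow> real^'n"
  assumes "range (sign_vector (par_trans u a)) \<subseteq> range (sign_vector (par_trans u b))"
  shows "range (sign_vector (elem_lift u a)) \<subseteq> range (sign_vector (elem_lift u b))"
proof
  fix \<sigma> assume "\<sigma> \<in> range (sign_vector (elem_lift u a))"
  then obtain x t where \<sigma>: "\<sigma> = sign_vector (elem_lift u a) (x, t)" by auto
  obtain x' t' where "\<And>i. sgn (u i \<bullet> x' + b$i * t') = sgn (u i \<bullet> x + a$i * t)"
    using homogenized_sign_transfer[OF assms] by blast
  then have "sign_vector (elem_lift u b) (x', t') = \<sigma>" unfolding \<sigma> sign_vector_elem_lift by simp
  then show "\<sigma> \<in> range (sign_vector (elem_lift u b))" by (metis rangeI)
qed

lemma open_face_derived_arr_circuit_signs: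
  assumes "F0 \<in> arr_open_faces {C. circuit u C} (derived_arr u c)" "a \<in> F0" "b \<in> F0"
    and "circuit u C"
  shows "sgn (c C \<bullet> a) = sgn (c C \<bullet> b)"
proof -
  have "sgnvec {C. circuit u C} (derived_arr u c) a = sgnvec {C. circuit u C} (derived_arr u c) b"
    using assms(1-3) by (auto simp: arr_open_faces_def)
  then have "sgnvec {C. circuit u C} (derived_arr u c) a C = sgnvec {C. circuit u C} (derived_arr u c) b C"
    by simp
  then show ?thesis using assms(4) by (simp add: sgnvec_def derived_arr_def)
qed

theorem theorem1p2:
  fixes u :: "'m::finite \<Rightarrow> real^'n"
    and c :: "'m set \<Rightarrow> real^'m"
    and F :: "(real^'m) set"
    and a b :: "real^'m"
  assumes nonzero: "\<forall>i. u i \<noteq> 0"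
    and cvec: "circuit_vectors u c"
    and F: "F \<in> arr_faces {C. circuit u C} (derived_arr u c)"
    and relint: "\<exists>F0\<in>arr_open_faces {C. circuit u C} (derived_arr u c).
                   closure F0 = F \<and> a \<in> F0 \<and> b \<in> F0"
  shows "normally_equiv_arr UNIV (par_trans u a) UNIV (par_trans u b)
       \<and> comb_equiv UNIV (par_trans u a) UNIV (par_trans u b)
       \<and> comb_equiv UNIV (coning u a) UNIV (coning u b)
       \<and> comb_equiv UNIV (elem_lift u a) UNIV (elem_lift u b)"
proof -
  obtain F0 where F0: "F0 \<in> arr_open_faces {C. circuit u C} (derived_arr u c)" "a \<in> F0" "b \<in> F0"
    using relint by blast
  have same_signs: "sgn (c C \<bullet> a) = sgn (c C \<bullet> b)" "sgn (c C \<bullet> b) = sgn (c C \<bullet> a)"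
    if "circuit u C" for C
    using open_face_derived_arr_circuit_signs[OF F0 that] by simp_all
  have par: "range (sign_vector (par_trans u a)) = range (sign_vector (par_trans u b))"
    using sign_vectors_par_trans_subset[OF cvec same_signs(1)]
      sign_vectors_par_trans_subset[OF cvec same_signs(2)] by blast
  have coning: "range (sign_vector (coning u a)) = range (sign_vector (coning u b))"
    using sign_vectors_coning_subset[of u a b] sign_vectors_coning_subset[of u b a] par by blast
  have lift: "range (sign_vector (elem_lift u a)) = range (sign_vector (elem_lift u b))"
    using sign_vectors_elem_lift_subset[of u a b] sign_vectors_elem_lift_subset[of u b a] par by blast
  have "normally_equiv_arr UNIV (par_trans u a) UNIV (par_trans u b)"
    by (rule normally_equiv_if_same_sign_vectors[OF par]) (simp add: par_trans_def)
  then show ?thesis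
    using comb_equiv_if_same_sign_vectors[OF par] comb_equiv_if_same_sign_vectors[OF coning]
      comb_equiv_if_same_sign_vectors[OF lift] by blast
qed

end
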